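(* Let $\rho_X,\rho_Z\in(0,1/2)$ and let $C\sim\mathrm{CSS}_n(\rho_X,\rho_Z)$ be a random CSS code. For any constant $f\in(0,1)$, $$\Pr_C\big(B_C(f)\cap L_Z(C)\neq\emptyset\big)\le 2^{-n(\rho_X-6f)}$$ for all sufficiently large $n$.
   Context: $\mathrm{CSS}_n(\rho_X,\rho_Z)$ (with $\rho_Xn,\rho_Zn$ integers): choose $H_Z\in\mathbb{F}_2^{\rho_Zn\times n}$ uniformly at random, then $H_X\in\mathbb{F}_2^{\rho_Xn\times n}$ uniformly at random among matrices with $H_XH_Z^{\mathrm T}=0$; $C=(H_X,H_Z)$. $L_Z(C)=\ker H_X\setminus\mathrm{row}(H_Z)$ is the set of nontrivial logical $Z$ operators (as vectors in $\mathbb{F}_2^n$). Let $S_Z$ be the set of rows of $H_Z$. For $i\in[n]$, $Y_C^i=\{y\in\mathbb{F}_2^n:\exists s\in S_Z,\ y_j=s_j\ \forall j\le i,\ y_j=0\ \forall j>i\}$, and $Y_C=\bigcup_i Y_C^i$. The $Y$-weight $|w|_Y$ of $w\in\mathbb{F}_2^n$ is the minimum size of $S\subseteq Y_C$ with $w=\sum_{s\in S}s$. $B_C(f)=\{w\in\mathbb{F}_2^n:|w|_Y\le fn/\log n\}$. *)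

theory Defs
  imports "HOL-Probability.Probability"
begin

text \<open>Vectors in F_2^n are functions nat => bool supported on {0..<n}
  (coordinate j corresponds to the paper's coordinate j+1); addition is exclusive or.
  An m x n matrix is a function nat => nat => bool supported on {0..<m} x {0..<n};
  its i-th row is M i.\<close>

definition vecs :: "nat \<Rightarrow> (nat \<Rightarrow> bool) set" where
  "vecs n = {v. \<forall>j. n \<le> j \<longrightarrow> \<not> v j}"

definition mats :: "nat \<Rightarrow> nat \<Rightarrow> (nat \<Rightarrow> nat \<Rightarrow> bool) set" where
  "mats m n = {M. \<forall>i j. (m \<le> i \<or> n \<le> j) \<longrightarrow> \<not> M i j}"

definition dot2 :: "nat \<Rightarrow> (nat \<Rightarrow> bool) \<Rightarrow> (nat \<Rightarrow> bool) \<Rightarrow> bool" where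
  "dot2 n u v = odd (card {j. j < n \<and> u j \<and> v j})"

definition vsum2 :: "(nat \<Rightarrow> bool) set \<Rightarrow> (nat \<Rightarrow> bool)" where
  "vsum2 S = (\<lambda>j. odd (card {s \<in> S. s j}))"

definition orth2 :: "nat \<Rightarrow> nat \<Rightarrow> nat \<Rightarrow> (nat \<Rightarrow> nat \<Rightarrow> bool) \<Rightarrow> (nat \<Rightarrow> nat \<Rightarrow> bool) \<Rightarrow> bool" where
  "orth2 n mX mZ HX HZ = (\<forall>i<mX. \<forall>k<mZ. \<not> dot2 n (HX i) (HZ k))"

text \<open>Random CSS code CSS_n with mX = rho_X n and mZ = rho_Z n rows:
  H_Z uniform, then H_X uniform among matrices with H_X H_Z^T = 0.\<close>
definition CSS :: "nat \<Rightarrow> nat \<Rightarrow> nat \<Rightarrow> ((nat \<Rightarrow> nat \<Rightarrow> bool) \<times> (nat \<Rightarrow> nat \<Rightarrow> bool)) pmf" where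
  "CSS n mX mZ =
     bind_pmf (pmf_of_set (mats mZ n)) (\<lambda>HZ.
     bind_pmf (pmf_of_set {HX \<in> mats mX n. orth2 n mX mZ HX HZ}) (\<lambda>HX.
     return_pmf (HX, HZ)))"

definition ker2 :: "nat \<Rightarrow> nat \<Rightarrow> (nat \<Rightarrow> nat \<Rightarrow> bool) \<Rightarrow> (nat \<Rightarrow> bool) set" where
  "ker2 n m H = {v \<in> vecs n. \<forall>i<m. \<not> dot2 n (H i) v}"

definition rowspace2 :: "nat \<Rightarrow> (nat \<Rightarrow> nat \<Rightarrow> bool) \<Rightarrow> (nat \<Rightarrow> bool) set" where
  "rowspace2 m H = {vsum2 S | S. S \<subseteq> H ` {..<m}}"

definition LZ :: "nat \<Rightarrow> nat \<Rightarrow> nat \<Rightarrow> (nat \<Rightarrow> nat \<Rightarrow> bool) \<Rightarrow> (nat \<Rightarrow> nat \<Rightarrow> bool) \<Rightarrow> (nat \<Rightarrow> bool) set" where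
  "LZ n mX mZ HX HZ = ker2 n mX HX - rowspace2 mZ HZ"

text \<open>Y_C: truncations of rows of H_Z to the first i coordinates (paper's i in [n]).\<close>
definition YC :: "nat \<Rightarrow> nat \<Rightarrow> (nat \<Rightarrow> nat \<Rightarrow> bool) \<Rightarrow> (nat \<Rightarrow> bool) set" where
  "YC n mZ HZ = {(\<lambda>j. j \<le> i \<and> s j) | i s. i < n \<and> s \<in> HZ ` {..<mZ}}"

text \<open>Y-weight: minimum size of a subset of Y_C summing to w (infinity if none).\<close>
definition yweight :: "nat \<Rightarrow> nat \<Rightarrow> (nat \<Rightarrow> nat \<Rightarrow> bool) \<Rightarrow> (nat \<Rightarrow> bool) \<Rightarrow> enat" where
  "yweight n mZ HZ w = Inf {enat (card S) | S. S \<subseteq> YC n mZ HZ \<and> w = vsum2 S}"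

definition BC :: "nat \<Rightarrow> nat \<Rightarrow> (nat \<Rightarrow> nat \<Rightarrow> bool) \<Rightarrow> real \<Rightarrow> (nat \<Rightarrow> bool) set" where
  "BC n mZ HZ f = {w \<in> vecs n. \<exists>k::nat. yweight n mZ HZ w = enat k \<and>
                                   real k \<le> f * real n / log 2 (real n)}"

end

theory Submission
  imports Defs
begin

(* For fixed H_Z, the rows of H_X are independent and uniform on the orthogonal complement V of
   row(H_Z).  A vector w outside row(H_Z) is separated from row(H_Z) by some v in V, and
   translation by v swaps the halves of V on which <h, w> is 0 and 1; so w lies in ker H_X with
   probability exactly 2^-mX.  A union bound over B_C(f) finishes the proof: each of its elements
   is a sum of at most K = fn/log n of the at most n mZ < n^2 vectors of Y_C, so
   |B_C(f)| <= n^(2K) <= 2^(2fn).  This even gives the exponent 2f in place of 6f. *)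

definition vadd2 :: "(nat \<Rightarrow> bool) \<Rightarrow> (nat \<Rightarrow> bool) \<Rightarrow> (nat \<Rightarrow> bool)" where
  "vadd2 u v = (\<lambda>j. u j \<noteq> v j)"

lemma odd_card_sym_diff:
  assumes "finite A" "finite B"
  shows "odd (card ((A - B) \<union> (B - A))) \<longleftrightarrow> (odd (card A) \<noteq> odd (card B))"
proof -
  have "card A = card (A - B) + card (A \<inter> B)" "card B = card (B - A) + card (A \<inter> B)"
    using assms by (metis Int_commute card_Int_Diff add.commute finite_Int)+
  moreover have "card ((A - B) \<union> (B - A)) = card (A - B) + card (B - A)"
    using assms by (intro card_Un_disjoint) auto
  ultimately show ?thesis by presburger
qed

lemma dot2_commute: "dot2 n u v = dot2 n v u"
  unfolding dot2_def by (simp add: conj_ac)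

lemma dot2_vadd2_right: "dot2 n u (vadd2 v w) \<longleftrightarrow> (dot2 n u v \<noteq> dot2 n u w)"
proof -
  let ?A = "{j. j < n \<and> u j \<and> v j}" and ?B = "{j. j < n \<and> u j \<and> w j}"
  have "{j. j < n \<and> u j \<and> vadd2 v w j} = (?A - ?B) \<union> (?B - ?A)"
    unfolding vadd2_def by auto
  then show ?thesis
    unfolding dot2_def using odd_card_sym_diff[of ?A ?B] by simp
qed

lemma dot2_vadd2_left: "dot2 n (vadd2 v w) u \<longleftrightarrow> (dot2 n v u \<noteq> dot2 n w u)"
  using dot2_vadd2_right[of n u v w] dot2_commute[of n u] by simp

lemma vsum2_insert:
  assumes "finite S" "r \<notin> S"
  shows "vsum2 (insert r S) = vadd2 r (vsum2 S)"
proof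
  fix j
  have "{s \<in> insert r S. s j} = (if r j then insert r {s \<in> S. s j} else {s \<in> S. s j})"
    by auto
  then show "vsum2 (insert r S) j = vadd2 r (vsum2 S) j"
    unfolding vsum2_def vadd2_def using assms by auto
qed

lemma vadd2_in_vecs: "u \<in> vecs n \<Longrightarrow> v \<in> vecs n \<Longrightarrow> vadd2 u v \<in> vecs n"
  unfolding vecs_def vadd2_def by auto

lemma zero_in_vecs: "(\<lambda>_. False) \<in> vecs n"
  unfolding vecs_def by simp

lemma finite_vecs: "finite (vecs n)"
proof -
  have "vecs n \<subseteq> (\<lambda>S j. j \<in> S) ` Pow {..<n}"
  proof
    fix v assume "v \<in> vecs n"
    then have "v = (\<lambda>j. j \<in> {j. j < n \<and> v j})"
      unfolding vecs_def by (auto simp: fun_eq_iff not_le[symmetric])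
    then show "v \<in> (\<lambda>S j. j \<in> S) ` Pow {..<n}" by blast
  qed
  then show ?thesis by (rule finite_subset) auto
qed

lemma separating_vector_exists:
  assumes "finite R" "R \<subseteq> vecs n" "w \<in> vecs n" "w \<notin> {vsum2 S | S. S \<subseteq> R}"
  shows "\<exists>v\<in>vecs n. (\<forall>r\<in>R. \<not> dot2 n v r) \<and> dot2 n v w"
  using assms
proof (induction R arbitrary: w rule: finite_induct)
  case empty
  have "w \<noteq> vsum2 {}" using empty.prems(3) by blast
  then obtain j where "w j" by (auto simp: vsum2_def fun_eq_iff)
  moreover have "\<forall>j. n \<le> j \<longrightarrow> \<not> w j" using empty.prems(2) by (simp add: vecs_def)
  ultimately have "j < n" by (meson not_le)
  then have "{i. i < n \<and> i = j \<and> w i} = {j}" using \<open>w j\<close> by auto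
  with \<open>j < n\<close> have "dot2 n (\<lambda>i. i = j) w" "(\<lambda>i. i = j) \<in> vecs n"
    by (auto simp: dot2_def vecs_def)
  then show ?case by blast
next
  case (insert r R)
  have "w \<notin> {vsum2 S | S. S \<subseteq> R}" using insert.prems by blast
  then obtain v1 where v1: "v1 \<in> vecs n" "\<forall>x\<in>R. \<not> dot2 n v1 x" "dot2 n v1 w"
    using insert.IH insert.prems(1,2) by blast
  have "vadd2 w r \<notin> {vsum2 S | S. S \<subseteq> R}"
  proof
    assume "vadd2 w r \<in> {vsum2 S | S. S \<subseteq> R}"
    then obtain S where S: "S \<subseteq> R" "vadd2 w r = vsum2 S" by auto
    have "finite S" "r \<notin> S" using S(1) insert.hyps finite_subset by auto
    then have "vsum2 (insert r S) = vadd2 r (vadd2 w r)" using S(2) by (simp add: vsum2_insert)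
    also have "\<dots> = w" unfolding vadd2_def by auto
    finally show False using S insert.prems by blast
  qed
  moreover have "vadd2 w r \<in> vecs n" using insert.prems by (simp add: vadd2_in_vecs)
  ultimately obtain v2 where v2: "v2 \<in> vecs n" "\<forall>x\<in>R. \<not> dot2 n v2 x" "dot2 n v2 (vadd2 w r)"
    using insert.IH insert.prems(1) by blast
  show ?case
  proof (cases "dot2 n v1 r")
    case False
    with v1 show ?thesis by auto
  next
    case True
    show ?thesis
    proof (cases "dot2 n v2 r")
      case False
      with v2 show ?thesis by (auto simp: dot2_vadd2_right)
    next
      case True
      with \<open>dot2 n v1 r\<close> v1 v2 show ?thesis
        by (intro bexI[of _ "vadd2 v1 v2"])
          (auto simp: dot2_vadd2_left dot2_vadd2_right vadd2_in_vecs)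
    qed
  qed
qed

definition row_mats :: "nat \<Rightarrow> (nat \<Rightarrow> bool) set \<Rightarrow> (nat \<Rightarrow> nat \<Rightarrow> bool) set" where
  "row_mats m A = {F. (\<forall>i<m. F i \<in> A) \<and> (\<forall>i. m \<le> i \<longrightarrow> F i = (\<lambda>_. False))}"

lemma bij_betw_row_mats_PiE:
  "bij_betw (\<lambda>F. restrict F {..<m}) (row_mats m A) (PiE {..<m} (\<lambda>_. A))"
  by (rule bij_betw_byWitness[where f'="\<lambda>P i. if i < m then P i else (\<lambda>_. False)"])
     (auto simp: row_mats_def restrict_def PiE_def extensional_def fun_eq_iff)

lemma finite_row_mats: "finite A \<Longrightarrow> finite (row_mats m A)"
  using bij_betw_finite[OF bij_betw_row_mats_PiE] by (simp add: finite_PiE)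

lemma card_row_mats: "finite A \<Longrightarrow> card (row_mats m A) = card A ^ m"
  using bij_betw_same_card[OF bij_betw_row_mats_PiE] by (simp add: card_PiE)

lemma zero_in_row_mats: "(\<lambda>_. False) \<in> A \<Longrightarrow> (\<lambda>_ _. False) \<in> row_mats m A"
  unfolding row_mats_def by simp

lemma mats_eq_row_mats: "mats m n = row_mats m (vecs n)"
  unfolding mats_def row_mats_def vecs_def by (auto simp: fun_eq_iff) (meson not_le)

lemma finite_mats: "finite (mats m n)"
  unfolding mats_eq_row_mats by (rule finite_row_mats[OF finite_vecs])

lemma mats_nonempty: "mats m n \<noteq> {}"
  unfolding mats_def by blast

definition orth_compl :: "nat \<Rightarrow> (nat \<Rightarrow> bool) set \<Rightarrow> (nat \<Rightarrow> bool) set" where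
  "orth_compl n R = {h \<in> vecs n. \<forall>r\<in>R. \<not> dot2 n h r}"

lemma finite_orth_compl: "finite (orth_compl n R)"
  unfolding orth_compl_def using finite_vecs by auto

lemma zero_in_orth_compl: "(\<lambda>_. False) \<in> orth_compl n R"
  unfolding orth_compl_def dot2_def by (simp add: zero_in_vecs)

lemma card_orth_compl_insert:
  assumes v: "v \<in> orth_compl n R" "dot2 n v w"
  shows "card (orth_compl n R) = 2 * card (orth_compl n (insert w R))"
proof -
  let ?V = "orth_compl n R"
  let ?Even = "orth_compl n (insert w R)" and ?Odd = "{h \<in> ?V. dot2 n h w}"
  have "vadd2 v (vadd2 v h) = h" for h
    unfolding vadd2_def by auto
  moreover have "vadd2 v ` ?Even \<subseteq> ?Odd" "vadd2 v ` ?Odd \<subseteq> ?Even"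
    using v by (auto simp: orth_compl_def dot2_vadd2_left vadd2_in_vecs)
  ultimately have "bij_betw (vadd2 v) ?Even ?Odd"
    by (intro bij_betw_byWitness[where f'="vadd2 v"]) auto
  then have "card ?Even = card ?Odd" by (rule bij_betw_same_card)
  moreover have "?V = ?Even \<union> ?Odd" "?Even \<inter> ?Odd = {}"
    unfolding orth_compl_def by blast+
  ultimately show ?thesis
    using finite_orth_compl card_Un_disjoint by (metis finite_Un mult_2)
qed

lemma orth_mats_eq_row_mats:
  "{HX \<in> mats mX n. orth2 n mX mZ HX HZ} = row_mats mX (orth_compl n (HZ ` {..<mZ}))"
  unfolding mats_eq_row_mats orth2_def row_mats_def orth_compl_def by auto

lemma prob_in_ker2:
  assumes HZ: "HZ \<in> mats mZ n" and w: "w \<in> vecs n" "w \<notin> rowspace2 mZ HZ"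
  shows "measure_pmf.prob (pmf_of_set {HX \<in> mats mX n. orth2 n mX mZ HX HZ})
           {HX. w \<in> ker2 n mX HX} = 1 / 2 ^ mX"
proof -
  define R where "R = HZ ` {..<mZ}"
  have "R \<subseteq> vecs n" using HZ unfolding R_def mats_eq_row_mats row_mats_def by auto
  then obtain v where "v \<in> orth_compl n R" "dot2 n v w"
    using separating_vector_exists[of R n w] w
    by (auto simp: R_def rowspace2_def orth_compl_def)
  then have half: "card (orth_compl n R) = 2 * card (orth_compl n (insert w R))"
    by (rule card_orth_compl_insert)
  have pos: "card (orth_compl n (insert w R)) > 0"
    using finite_orth_compl zero_in_orth_compl card_gt_0_iff by blast
  have "row_mats mX (orth_compl n R) \<inter> {HX. w \<in> ker2 n mX HX}
        = row_mats mX (orth_compl n (insert w R))"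
    using w(1) unfolding row_mats_def orth_compl_def ker2_def by auto
  then have "measure_pmf.prob (pmf_of_set (row_mats mX (orth_compl n R))) {HX. w \<in> ker2 n mX HX}
        = card (orth_compl n (insert w R)) ^ mX / card (orth_compl n R) ^ mX"
    using zero_in_row_mats[OF zero_in_orth_compl, of mX n R]
    by (subst measure_pmf_of_set)
       (auto simp: card_row_mats finite_row_mats finite_orth_compl)
  also have "\<dots> = 1 / 2 ^ mX"
    using pos by (simp add: half power_mult_distrib)
  finally show ?thesis unfolding orth_mats_eq_row_mats R_def .
qed

lemma prob_BC_meets_LZ_given_HZ:
  assumes HZ: "HZ \<in> mats mZ n"
  shows "measure_pmf.prob (pmf_of_set {HX \<in> mats mX n. orth2 n mX mZ HX HZ})
           {HX. BC n mZ HZ f \<inter> LZ n mX mZ HX HZ \<noteq> {}} \<le> card (BC n mZ HZ f) / 2 ^ mX"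
proof -
  let ?p = "pmf_of_set {HX \<in> mats mX n. orth2 n mX mZ HX HZ}"
  let ?W = "BC n mZ HZ f - rowspace2 mZ HZ"
  have BC_vecs: "BC n mZ HZ f \<subseteq> vecs n" unfolding BC_def by auto
  then have finBC: "finite (BC n mZ HZ f)" using finite_vecs finite_subset by blast
  have "{HX. BC n mZ HZ f \<inter> LZ n mX mZ HX HZ \<noteq> {}} = (\<Union>w\<in>?W. {HX. w \<in> ker2 n mX HX})"
    unfolding LZ_def by auto
  then have "measure_pmf.prob ?p {HX. BC n mZ HZ f \<inter> LZ n mX mZ HX HZ \<noteq> {}}
      \<le> (\<Sum>w\<in>?W. measure_pmf.prob ?p {HX. w \<in> ker2 n mX HX})"
    by (simp add: measure_UNION_le finBC)
  also have "\<dots> = card ?W / 2 ^ mX"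
    using prob_in_ker2[OF HZ] BC_vecs by (simp add: subset_iff)
  also have "\<dots> \<le> card (BC n mZ HZ f) / 2 ^ mX"
    using card_mono[OF finBC Diff_subset] by (simp add: divide_right_mono)
  finally show ?thesis .
qed

lemma card_subsets_card_le:
  assumes "finite Y"
  shows "card {S. S \<subseteq> Y \<and> card S \<le> K} \<le> (card Y + 1) ^ K"
proof -
  let ?L = "{xs. set xs \<subseteq> insert None (Some ` Y) \<and> length xs = K}"
  have "{S. S \<subseteq> Y \<and> card S \<le> K} \<subseteq> (\<lambda>xs. {y. Some y \<in> set xs}) ` ?L"
  proof
    fix S assume S: "S \<in> {S. S \<subseteq> Y \<and> card S \<le> K}"
    then obtain ys where ys: "set ys = S" "distinct ys"
      using assms finite_subset finite_distinct_list by (metis mem_Collect_eq)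
    let ?xs = "map Some ys @ replicate (K - card S) None"
    have "?xs \<in> ?L" using S ys distinct_card by fastforce
    moreover have "S = {y. Some y \<in> set ?xs}" using ys by auto
    ultimately show "S \<in> (\<lambda>xs. {y. Some y \<in> set xs}) ` ?L" by blast
  qed
  then have "card {S. S \<subseteq> Y \<and> card S \<le> K} \<le> card ((\<lambda>xs. {y. Some y \<in> set xs}) ` ?L)"
    by (rule card_mono[rotated]) (simp add: assms finite_lists_length_eq)
  also have "\<dots> \<le> card ?L" by (rule card_image_le) (simp add: assms finite_lists_length_eq)
  also have "\<dots> = (card Y + 1) ^ K" by (simp add: assms card_lists_length_eq card_image)
  finally show ?thesis .
qed

lemma yweight_enatE:
  assumes "yweight n mZ HZ w = enat k"
  obtains S where "S \<subseteq> YC n mZ HZ" "w = vsum2 S" "card S = k"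
proof -
  let ?T = "{enat (card S) | S. S \<subseteq> YC n mZ HZ \<and> w = vsum2 S}"
  have "?T \<noteq> {}"
    using assms unfolding yweight_def by (metis Inf_empty enat.distinct(1) top_enat_def)
  then have "Inf ?T \<in> ?T" unfolding Inf_enat_def by (metis (mono_tags, lifting) LeastI ex_in_conv)
  then show ?thesis using assms that unfolding yweight_def by auto
qed

lemma YC_eq_image: "YC n mZ HZ = (\<lambda>(i, s) j. j \<le> i \<and> s j) ` ({..<n} \<times> HZ ` {..<mZ})"
  unfolding YC_def by auto

lemma finite_YC: "finite (YC n mZ HZ)"
  unfolding YC_eq_image by simp

lemma card_YC_le: "card (YC n mZ HZ) \<le> n * mZ"
proof -
  have "card (YC n mZ HZ) \<le> card ({..<n} \<times> HZ ` {..<mZ})"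
    unfolding YC_eq_image by (rule card_image_le) simp
  also have "\<dots> \<le> n * mZ"
    by (simp add: card_cartesian_product card_image_le[of "{..<mZ}", simplified])
  finally show ?thesis .
qed

lemma card_BC_le_power:
  "card (BC n mZ HZ f) \<le> (n * mZ + 1) ^ nat \<lfloor>f * n / log 2 n\<rfloor>"
proof -
  let ?K = "nat \<lfloor>f * n / log 2 n\<rfloor>"
  have "BC n mZ HZ f \<subseteq> vsum2 ` {S. S \<subseteq> YC n mZ HZ \<and> card S \<le> ?K}"
  proof
    fix w assume "w \<in> BC n mZ HZ f"
    then obtain k where k: "yweight n mZ HZ w = enat k" "real k \<le> f * n / log 2 n"
      unfolding BC_def by auto
    from k(2) have "k \<le> ?K" by (simp add: le_nat_floor)
    with yweight_enatE[OF k(1)] show "w \<in> vsum2 ` {S. S \<subseteq> YC n mZ HZ \<and> card S \<le> ?K}"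
      by (metis (mono_tags, lifting) image_eqI mem_Collect_eq)
  qed
  then have "card (BC n mZ HZ f) \<le> card (vsum2 ` {S. S \<subseteq> YC n mZ HZ \<and> card S \<le> ?K})"
    by (rule card_mono[rotated]) (use finite_YC in auto)
  also have "\<dots> \<le> card {S. S \<subseteq> YC n mZ HZ \<and> card S \<le> ?K}"
    by (rule card_image_le) (use finite_YC in auto)
  also have "\<dots> \<le> (card (YC n mZ HZ) + 1) ^ ?K" by (rule card_subsets_card_le[OF finite_YC])
  also have "\<dots> \<le> (n * mZ + 1) ^ ?K" by (simp add: card_YC_le power_mono)
  finally show ?thesis .
qed

lemma card_BC_le:
  assumes n: "2 \<le> n" and "mZ < n" "0 \<le> f"
  shows "card (BC n mZ HZ f) \<le> 2 powr (2 * f * n)"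
proof -
  define K where "K = nat \<lfloor>f * n / log 2 n\<rfloor>"
  have "n * mZ + 1 \<le> n * (mZ + 1)" using n by simp
  also have "\<dots> \<le> n * n" using assms by (intro mult_le_mono2) simp
  finally have "n * mZ + 1 \<le> n ^ 2" by (simp add: power2_eq_square)
  then have "card (BC n mZ HZ f) \<le> (n ^ 2) ^ K"
    using card_BC_le_power[of n mZ HZ f] power_mono unfolding K_def by (fastforce intro: le_trans)
  then have "card (BC n mZ HZ f) \<le> real n ^ (2 * K)"
    by (metis of_nat_le_iff of_nat_power power_mult)
  also have "\<dots> = real n powr real (2 * K)"
    using n by (subst powr_realpow) auto
  also have "\<dots> = (2 powr log 2 n) powr real (2 * K)"
    using n by simp
  also have "\<dots> = 2 powr (2 * (K * log 2 n))"
    by (simp add: powr_powr mult_ac)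
  also have "\<dots> \<le> 2 powr (2 * f * n)"
  proof -
    have "K \<le> f * n / log 2 n" unfolding K_def using assms by simp
    then show ?thesis using n by (simp add: field_simps)
  qed
  finally show ?thesis .
qed

lemma measure_bind_pmf_le:
  assumes "\<And>x. x \<in> set_pmf p \<Longrightarrow> measure_pmf.prob (q x) A \<le> c"
  shows "measure_pmf.prob (bind_pmf p q) A \<le> c"
proof -
  obtain x where "x \<in> set_pmf p" using set_pmf_not_empty[of p] by blast
  then have c: "0 \<le> c" using assms measure_nonneg order_trans by blast
  have "emeasure (bind_pmf p q) A \<le> ennreal c"
    unfolding emeasure_bind_pmf
    by (rule measure_pmf.nn_integral_le_const)
      (use assms in \<open>auto intro!: AE_pmfI simp: measure_pmf.emeasure_eq_measure ennreal_leI\<close>)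
  then show ?thesis using c by (simp add: measure_pmf.emeasure_eq_measure)
qed

lemma prob_CSS_BC_meets_LZ_le:
  assumes n: "2 \<le> n" and "mZ < n" "0 \<le> f"
  shows "measure_pmf.prob (CSS n mX mZ) {(HX, HZ). BC n mZ HZ f \<inter> LZ n mX mZ HX HZ \<noteq> {}}
           \<le> 2 powr (2 * f * n) / 2 ^ mX"
  unfolding CSS_def
proof (rule measure_bind_pmf_le)
  fix HZ assume "HZ \<in> set_pmf (pmf_of_set (mats mZ n))"
  then have HZ: "HZ \<in> mats mZ n" by (simp add: finite_mats mats_nonempty)
  have "card (BC n mZ HZ f) / 2 ^ mX \<le> 2 powr (2 * f * n) / 2 ^ mX"
    using card_BC_le[OF assms] by (simp add: divide_right_mono)
  then have "measure_pmf.prob (pmf_of_set {HX \<in> mats mX n. orth2 n mX mZ HX HZ})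
      {HX. BC n mZ HZ f \<inter> LZ n mX mZ HX HZ \<noteq> {}} \<le> 2 powr (2 * f * n) / 2 ^ mX"
    by (rule order_trans[OF prob_BC_meets_LZ_given_HZ[OF HZ]])
  then show "measure_pmf.prob (pmf_of_set {HX \<in> mats mX n. orth2 n mX mZ HX HZ} \<bind>
      (\<lambda>HX. return_pmf (HX, HZ))) {(HX, HZ). BC n mZ HZ f \<inter> LZ n mX mZ HX HZ \<noteq> {}}
      \<le> 2 powr (2 * f * n) / 2 ^ mX"
    by (simp add: vimage_def flip: map_pmf_def)
qed

theorem lemma18:
  fixes \<rho>X \<rho>Z f :: real
  assumes "0 < \<rho>X" "\<rho>X < 1/2" "0 < \<rho>Z" "\<rho>Z < 1/2" "0 < f" "f < 1"
  shows "\<exists>N. \<forall>n mX mZ. N \<le> n \<longrightarrow> real mX = \<rho>X * real n \<longrightarrow> real mZ = \<rho>Z * real n \<longrightarrow>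
           measure_pmf.prob (CSS n mX mZ)
             {(HX, HZ). BC n mZ HZ f \<inter> LZ n mX mZ HX HZ \<noteq> {}}
           \<le> 2 powr (- (real n * (\<rho>X - 6 * f)))"
proof (intro exI[of _ 2] allI impI)
  fix n mX mZ :: nat
  assume n: "2 \<le> n" and mX: "real mX = \<rho>X * real n" and mZ: "real mZ = \<rho>Z * real n"
  have "\<rho>Z * n < n" using n assms(4) by simp
  with mZ have "mZ < n" by simp
  have "measure_pmf.prob (CSS n mX mZ) {(HX, HZ). BC n mZ HZ f \<inter> LZ n mX mZ HX HZ \<noteq> {}}
      \<le> 2 powr (2 * f * n) / 2 ^ mX"
    using prob_CSS_BC_meets_LZ_le[OF n \<open>mZ < n\<close>] assms(5) by simp
  also have "\<dots> = 2 powr (2 * f * n - \<rho>X * n)"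
    by (simp add: powr_diff powr_realpow flip: mX)
  also have "\<dots> \<le> 2 powr (- (n * (\<rho>X - 6 * f)))"
    using assms(5) by (intro powr_mono) (auto simp: algebra_simps)
  finally show "measure_pmf.prob (CSS n mX mZ) {(HX, HZ). BC n mZ HZ f \<inter> LZ n mX mZ HX HZ \<noteq> {}}
      \<le> 2 powr (- (n * (\<rho>X - 6 * f)))" .
qed

end
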